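(* Let $R$ be a DT ring. Then $R/J(R)\cong R_1\times R_2$, where $R_1$ is either the zero ring or a nonzero Boolean ring, and $R_2$ is either the zero ring or a nonzero Yaqub ring.
   Context: All rings are associative with identity. $J(R)$ is the Jacobson radical, $U(R)$ the group of units. $\Delta(R)=\{x\in R: x+u\in U(R)\text{ for all }u\in U(R)\}$. $\mathrm{Tr}(R)=\{x\in R: x^3=x\}$ (tripotent elements). A ring $R$ is a DT ring ($\Delta$-tripotent ring) if every $r\in R$ can be written $r=e+d$ with $e\in\mathrm{Tr}(R)$ and $d\in\Delta(R)$. A Boolean ring is a ring in which every element is idempotent. A Yaqub ring is a ring that is a subdirect product of copies of $\mathbb{Z}_3$ (equivalently, a ring in which $3$ is nilpotent and $x^3=x$ for all $x$). *)

theory Defs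
  imports "HOL-Algebra.Algebra"
begin

(* Left ideals (HOL-Algebra only has two-sided ideals). *)
definition left_ideal :: "'a set \<Rightarrow> ('a, 'b) ring_scheme \<Rightarrow> bool" where
  "left_ideal I R \<longleftrightarrow> additive_subgroup I R \<and>
     (\<forall>a \<in> carrier R. \<forall>x \<in> I. a \<otimes>\<^bsub>R\<^esub> x \<in> I)"

definition maximal_left_ideal :: "'a set \<Rightarrow> ('a, 'b) ring_scheme \<Rightarrow> bool" where
  "maximal_left_ideal I R \<longleftrightarrow> left_ideal I R \<and> I \<noteq> carrier R \<and>
     (\<forall>K. left_ideal K R \<and> I \<subseteq> K \<longrightarrow> K = I \<or> K = carrier R)"

(* Jacobson radical: intersection of all maximal left ideals (= carrier R if there are none) *)
definition jacobson_radical :: "('a, 'b) ring_scheme \<Rightarrow> 'a set" where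
  "jacobson_radical R = carrier R \<inter> \<Inter> {I. maximal_left_ideal I R}"

definition Delta :: "('a, 'b) ring_scheme \<Rightarrow> 'a set" where
  "Delta R = {x \<in> carrier R. \<forall>u \<in> Units R. x \<oplus>\<^bsub>R\<^esub> u \<in> Units R}"

definition tripotents :: "('a, 'b) ring_scheme \<Rightarrow> 'a set" where
  "tripotents R = {x \<in> carrier R. x [^]\<^bsub>R\<^esub> (3::nat) = x}"

definition DT_ring :: "('a, 'b) ring_scheme \<Rightarrow> bool" where
  "DT_ring R \<longleftrightarrow> ring R \<and>
     (\<forall>r \<in> carrier R. \<exists>e \<in> tripotents R. \<exists>d \<in> Delta R. r = e \<oplus>\<^bsub>R\<^esub> d)"

definition zero_ring :: "('a, 'b) ring_scheme \<Rightarrow> bool" where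
  "zero_ring R \<longleftrightarrow> ring R \<and> carrier R = {\<zero>\<^bsub>R\<^esub>}"

definition boolean_ring :: "('a, 'b) ring_scheme \<Rightarrow> bool" where
  "boolean_ring R \<longleftrightarrow> ring R \<and> (\<forall>x \<in> carrier R. x \<otimes>\<^bsub>R\<^esub> x = x)"

(* Yaqub ring, via the equivalent characterization given in the paper:
   3 is nilpotent and x^3 = x for all x *)
definition yaqub_ring :: "('a, 'b) ring_scheme \<Rightarrow> bool" where
  "yaqub_ring R \<longleftrightarrow> ring R \<and>
     (\<exists>n::nat. (\<one>\<^bsub>R\<^esub> \<oplus>\<^bsub>R\<^esub> \<one>\<^bsub>R\<^esub> \<oplus>\<^bsub>R\<^esub> \<one>\<^bsub>R\<^esub>) [^]\<^bsub>R\<^esub> n = \<zero>\<^bsub>R\<^esub>) \<and>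
     (\<forall>x \<in> carrier R. x [^]\<^bsub>R\<^esub> (3::nat) = x)"

end

theory Submission
  imports Defs
begin

(* Every d in Delta(R) lies in every maximal left ideal, i.e. 1 - r d is left invertible for all r.
   Write r = e + d' with e tripotent: f = 1 - e^2 is idempotent and w = e + f satisfies w^2 = 1, so
   1 - r d = u + f d where u = 1 - w d - d' d is a unit (Delta(R) is closed under sums, products
   and multiplication by units). It remains that 1 + f d is left invertible for an idempotent f,
   which follows from the Peirce decomposition with respect to f. Hence Delta(R) is contained in
   J(R), and every element of R/J(R) is tripotent.
   In a ring with x^3 = x for all x, expanding (1 + 1)^3 gives 6 = 0, so by the Chinese remainder
   theorem the ring is the product of its quotients by the 3-torsion and by the 2-torsion ideal.
   In the first, 2 = 0 and expanding (x + 1)^3 gives 3 (x^2 + x) = 0, whence x^2 = x; in the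
   second, 3 = 0. *)

definition left_invertible :: "('a, 'b) monoid_scheme \<Rightarrow> 'a \<Rightarrow> bool" where
  "left_invertible M a \<longleftrightarrow> (\<exists>b \<in> carrier M. b \<otimes>\<^bsub>M\<^esub> a = \<one>\<^bsub>M\<^esub>)"

lemma (in monoid) Units_left_invertible: "u \<in> Units G \<Longrightarrow> left_invertible G u"
  unfolding left_invertible_def by (blast intro: Units_l_inv)

lemma (in monoid) left_invertible_mult:
  assumes "left_invertible G a" "left_invertible G b" "a \<in> carrier G" "b \<in> carrier G"
  shows "left_invertible G (a \<otimes> b)"
proof -
  obtain a' b' where "a' \<in> carrier G" "a' \<otimes> a = \<one>" "b' \<in> carrier G" "b' \<otimes> b = \<one>"
    using assms(1,2) unfolding left_invertible_def by blast
  then have "(b' \<otimes> a') \<otimes> (a \<otimes> b) = \<one>"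
    using assms(3,4) by (simp add: m_assoc[symmetric]) (simp add: m_assoc)
  with \<open>a' \<in> carrier G\<close> \<open>b' \<in> carrier G\<close> show ?thesis
    unfolding left_invertible_def by blast
qed

context ring begin

section \<open>\<Delta>(R) and left invertibility\<close>

lemma Units_uminus: "u \<in> Units R \<Longrightarrow> \<ominus> u \<in> Units R"
  using Units_m_closed[OF Units_minus_one_closed, of u] by (simp add: l_minus Units_closed)

lemma one_add_square_zero_Units:
  assumes "x \<in> carrier R" "x \<otimes> x = \<zero>"
  shows "\<one> \<oplus> x \<in> Units R"
proof -
  have "(\<one> \<oplus> x) \<otimes> (\<one> \<ominus> x) = \<one> \<ominus> x \<otimes> x" "(\<one> \<ominus> x) \<otimes> (\<one> \<oplus> x) = \<one> \<ominus> x \<otimes> x"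
    using assms(1) by (algebra, simp add: r_neg1 r_neg2)+
  with assms show ?thesis
    unfolding Units_def by (auto simp: a_minus_def intro!: bexI[of _ "\<one> \<ominus> x"])
qed

lemma Delta_closed: "d \<in> Delta R \<Longrightarrow> d \<in> carrier R"
  unfolding Delta_def by simp

lemma one_add_Delta_Units: "d \<in> Delta R \<Longrightarrow> \<one> \<oplus> d \<in> Units R"
  unfolding Delta_def by (auto simp: a_comm)

lemma Delta_uminus:
  assumes d: "d \<in> Delta R"
  shows "\<ominus> d \<in> Delta R"
  unfolding Delta_def
proof (intro CollectI conjI ballI)
  show "\<ominus> d \<in> carrier R" using Delta_closed[OF d] by simp
  fix u assume u: "u \<in> Units R"
  have "\<ominus> (d \<oplus> \<ominus> u) \<in> Units R"
    using d Units_uminus[OF u] unfolding Delta_def by (blast intro: Units_uminus)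
  also have "\<ominus> (d \<oplus> \<ominus> u) = \<ominus> d \<oplus> u"
    using Delta_closed[OF d] Units_closed[OF u] by algebra
  finally show "\<ominus> d \<oplus> u \<in> Units R" .
qed

lemma Delta_add:
  assumes d: "d \<in> Delta R" and d': "d' \<in> Delta R"
  shows "d \<oplus> d' \<in> Delta R"
  unfolding Delta_def
proof (intro CollectI conjI ballI)
  show "d \<oplus> d' \<in> carrier R" using Delta_closed[OF d] Delta_closed[OF d'] by simp
  fix u assume u: "u \<in> Units R"
  have "d \<oplus> (d' \<oplus> u) \<in> Units R"
    using d d' u unfolding Delta_def by blast
  then show "d \<oplus> d' \<oplus> u \<in> Units R"
    using Delta_closed[OF d] Delta_closed[OF d'] Units_closed[OF u] by (simp add: a_assoc)
qed

lemma Delta_mult_Units_left: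
  assumes u: "u \<in> Units R" and d: "d \<in> Delta R"
  shows "u \<otimes> d \<in> Delta R"
  unfolding Delta_def
proof (intro CollectI conjI ballI)
  show "u \<otimes> d \<in> carrier R" using Units_closed[OF u] Delta_closed[OF d] by simp
  fix v assume v: "v \<in> Units R"
  have "d \<oplus> inv u \<otimes> v \<in> Units R"
    using d Units_m_closed[OF Units_inv_Units[OF u] v] unfolding Delta_def by blast
  then have "u \<otimes> (d \<oplus> inv u \<otimes> v) \<in> Units R"
    by (rule Units_m_closed[OF u])
  also have "u \<otimes> (d \<oplus> inv u \<otimes> v) = u \<otimes> d \<oplus> v"
    using Units_closed[OF u] Units_inv_closed[OF u] Units_closed[OF v] Delta_closed[OF d] u
    by (simp add: r_distr m_assoc[symmetric])
  finally show "u \<otimes> d \<oplus> v \<in> Units R" .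
qed

lemma Delta_mult_Units_right:
  assumes u: "u \<in> Units R" and d: "d \<in> Delta R"
  shows "d \<otimes> u \<in> Delta R"
  unfolding Delta_def
proof (intro CollectI conjI ballI)
  show "d \<otimes> u \<in> carrier R" using Units_closed[OF u] Delta_closed[OF d] by simp
  fix v assume v: "v \<in> Units R"
  have "d \<oplus> v \<otimes> inv u \<in> Units R"
    using d Units_m_closed[OF v Units_inv_Units[OF u]] unfolding Delta_def by blast
  then have "(d \<oplus> v \<otimes> inv u) \<otimes> u \<in> Units R"
    using u by (rule Units_m_closed)
  also have "(d \<oplus> v \<otimes> inv u) \<otimes> u = d \<otimes> u \<oplus> v"
    using Units_closed[OF u] Units_inv_closed[OF u] Units_closed[OF v] Delta_closed[OF d] u
    by (simp add: l_distr m_assoc)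
  finally show "d \<otimes> u \<oplus> v \<in> Units R" .
qed

lemma Delta_mult:
  assumes d: "d \<in> Delta R" and d': "d' \<in> Delta R"
  shows "d \<otimes> d' \<in> Delta R"
proof -
  have "(\<one> \<oplus> d) \<otimes> d' \<oplus> \<ominus> d' \<in> Delta R"
    by (intro Delta_add Delta_uminus Delta_mult_Units_left one_add_Delta_Units d d')
  also have "(\<one> \<oplus> d) \<otimes> d' \<oplus> \<ominus> d' = d \<otimes> d'"
    using Delta_closed[OF d] Delta_closed[OF d'] by (simp add: l_distr a_assoc a_lcomm[of d'] r_neg)
  finally show ?thesis .
qed

lemma idempotent_complement:
  assumes f: "f \<in> carrier R" "f \<otimes> f = f"
  shows "(\<one> \<ominus> f) \<otimes> f = \<zero>" "f \<otimes> (\<one> \<ominus> f) = \<zero>" "f \<oplus> (\<one> \<ominus> f) = \<one>"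
proof -
  have "(\<one> \<ominus> f) \<otimes> f = f \<ominus> f \<otimes> f" "f \<otimes> (\<one> \<ominus> f) = f \<ominus> f \<otimes> f"
    using f(1) by (algebra, (simp add: r_neg1 r_neg2)?)+
  then show "(\<one> \<ominus> f) \<otimes> f = \<zero>" "f \<otimes> (\<one> \<ominus> f) = \<zero>"
    using f by (simp_all add: a_minus_def r_neg)
  show "f \<oplus> (\<one> \<ominus> f) = \<one>"
    using f(1) by algebra
qed

lemma Delta_corner_left_invertible:
  assumes f: "f \<in> carrier R" "f \<otimes> f = f" and d: "d \<in> Delta R"
  shows "left_invertible R (\<one> \<oplus> f \<otimes> d \<otimes> f)"
proof -
  define g where "g = \<one> \<ominus> f"
  have g: "g \<in> carrier R" "g \<otimes> f = \<zero>" "f \<otimes> g = \<zero>" "f \<oplus> g = \<one>"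
    using f idempotent_complement[OF f] unfolding g_def by simp_all
  have dc: "d \<in> carrier R" using Delta_closed[OF d] .
  have "(\<ominus> (g \<otimes> d \<otimes> f)) \<otimes> (\<ominus> (g \<otimes> d \<otimes> f)) = g \<otimes> d \<otimes> (f \<otimes> g) \<otimes> d \<otimes> f"
    using f(1) g(1) dc by algebra
  then have v: "\<one> \<oplus> \<ominus> (g \<otimes> d \<otimes> f) \<in> Units R"
    using f(1) g dc by (intro one_add_square_zero_Units) simp_all
  define z where "z = d \<oplus> (\<one> \<oplus> \<ominus> (g \<otimes> d \<otimes> f))"
  have zU: "z \<in> Units R"
    using d v unfolding z_def Delta_def by blast
  \<comment> \<open>\<open>z f = f + f d f\<close> lies in the corner ring \<open>f R f\<close>, where it acquires the left inverse \<open>f z\<inverse> f\<close>\<close>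
  have zf: "z \<otimes> f = f \<oplus> f \<otimes> d \<otimes> f"
  proof -
    have "z \<otimes> f = d \<otimes> f \<oplus> f \<oplus> \<ominus> (g \<otimes> d \<otimes> (f \<otimes> f))"
      unfolding z_def using f(1) g(1) dc by algebra
    also have "\<dots> = (f \<oplus> g) \<otimes> d \<otimes> f \<oplus> f \<oplus> \<ominus> (g \<otimes> d \<otimes> f)"
      using f g dc by simp
    also have "\<dots> = f \<oplus> f \<otimes> d \<otimes> f"
      using f(1) g(1) dc by algebra
    finally show ?thesis .
  qed
  define p where "p = f \<otimes> inv z \<otimes> f"
  have "(p \<oplus> g) \<otimes> (\<one> \<oplus> f \<otimes> d \<otimes> f)
        = f \<otimes> inv z \<otimes> (f \<oplus> (f \<otimes> f) \<otimes> d \<otimes> f) \<oplus> g \<oplus> g \<otimes> f \<otimes> d \<otimes> f"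
    unfolding p_def using f(1) Units_inv_closed[OF zU] g(1) dc by (algebra, (simp add: r_neg1 r_neg2)?)
  also have "\<dots> = f \<otimes> (inv z \<otimes> (z \<otimes> f)) \<oplus> g"
    using f g dc Units_inv_closed[OF zU] Units_closed[OF zU] by (simp add: zf m_assoc)
  also have "\<dots> = \<one>"
    using f g zU Units_closed[OF zU] Units_inv_closed[OF zU] by (simp add: m_assoc[symmetric])
  finally show ?thesis
    unfolding left_invertible_def p_def using f g(1) Units_inv_closed[OF zU] by blast
qed

lemma Delta_idempotent_left_invertible:
  assumes f: "f \<in> carrier R" "f \<otimes> f = f" and d: "d \<in> Delta R"
  shows "left_invertible R (\<one> \<oplus> f \<otimes> d)"
proof -
  define g where "g = \<one> \<ominus> f"
  have g: "g \<in> carrier R" "g \<otimes> f = \<zero>" "g \<oplus> f = \<one>"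
    using f idempotent_complement[OF f] unfolding g_def by (simp_all add: a_comm)
  have dc: "d \<in> carrier R" using Delta_closed[OF d] .
  have "(f \<otimes> d \<otimes> g) \<otimes> (f \<otimes> d \<otimes> g) = f \<otimes> d \<otimes> (g \<otimes> f) \<otimes> d \<otimes> g"
    using f(1) g(1) dc by algebra
  then have "\<one> \<oplus> f \<otimes> d \<otimes> g \<in> Units R"
    using f(1) g dc by (intro one_add_square_zero_Units) simp_all
  then have "left_invertible R ((\<one> \<oplus> f \<otimes> d \<otimes> g) \<otimes> (\<one> \<oplus> f \<otimes> d \<otimes> f))"
    using left_invertible_mult[OF Units_left_invertible Delta_corner_left_invertible[OF f d]] f(1) g(1) dc
    by simp
  moreover have "(\<one> \<oplus> f \<otimes> d \<otimes> g) \<otimes> (\<one> \<oplus> f \<otimes> d \<otimes> f)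
      = \<one> \<oplus> f \<otimes> d \<otimes> (g \<oplus> f) \<oplus> f \<otimes> d \<otimes> (g \<otimes> f) \<otimes> d \<otimes> f"
    using f(1) g(1) dc by (algebra, (simp add: r_neg1 r_neg2)?)
  ultimately show ?thesis
    using f g dc by simp
qed

section \<open>Maximal left ideals and the Jacobson radical\<close>

lemma maximal_left_idealD:
  assumes "maximal_left_ideal M R"
  shows "additive_subgroup M R" "\<And>a x. a \<in> carrier R \<Longrightarrow> x \<in> M \<Longrightarrow> a \<otimes> x \<in> M" "\<one> \<notin> M"
proof -
  show M: "additive_subgroup M R" "\<And>a x. a \<in> carrier R \<Longrightarrow> x \<in> M \<Longrightarrow> a \<otimes> x \<in> M"
    using assms unfolding maximal_left_ideal_def left_ideal_def by auto
  show "\<one> \<notin> M"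
  proof
    assume "\<one> \<in> M"
    then have "carrier R \<subseteq> M" using M(2)[of _ \<one>] by (metis r_one subsetI)
    with assms additive_subgroup.a_subset[OF M(1)] show False
      unfolding maximal_left_ideal_def by blast
  qed
qed

lemma left_ideal_add_left_multiples:
  assumes M: "left_ideal M R" and y: "y \<in> carrier R"
  shows "left_ideal {m \<oplus> r \<otimes> y | m r. m \<in> M \<and> r \<in> carrier R} R" (is "left_ideal ?K R")
proof -
  have Ms: "additive_subgroup M R" and Ml: "\<And>a x. a \<in> carrier R \<Longrightarrow> x \<in> M \<Longrightarrow> a \<otimes> x \<in> M"
    using M unfolding left_ideal_def by auto
  have Mc: "\<And>m. m \<in> M \<Longrightarrow> m \<in> carrier R" using additive_subgroup.a_Hcarr[OF Ms] .
  show ?thesis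
    unfolding left_ideal_def
  proof (intro conjI ballI additive_subgroupI add.subgroupI)
    show "?K \<subseteq> carrier R" using Mc y by auto
    have "\<zero> = \<zero> \<oplus> \<zero> \<otimes> y" using y by simp
    then show "?K \<noteq> {}" using additive_subgroup.zero_closed[OF Ms] by blast
  next
    fix a assume "a \<in> ?K"
    then obtain m r where m: "m \<in> M" "r \<in> carrier R" "a = m \<oplus> r \<otimes> y" by blast
    then have "\<ominus> a = \<ominus> m \<oplus> \<ominus> r \<otimes> y" using Mc y by (simp add: l_minus minus_add)
    then show "\<ominus> a \<in> ?K" using additive_subgroup.a_inv_closed[OF Ms] m by blast
  next
    fix a b assume "a \<in> ?K" "b \<in> ?K"
    then obtain m r m' r' where m: "m \<in> M" "r \<in> carrier R" "a = m \<oplus> r \<otimes> y"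
      and m': "m' \<in> M" "r' \<in> carrier R" "b = m' \<oplus> r' \<otimes> y" by blast
    then have "a \<oplus> b = (m \<oplus> m') \<oplus> (r \<oplus> r') \<otimes> y"
      using Mc y by algebra
    then show "a \<oplus> b \<in> ?K" using additive_subgroup.a_closed[OF Ms] m m' by blast
  next
    fix c a assume c: "c \<in> carrier R" and "a \<in> ?K"
    then obtain m r where m: "m \<in> M" "r \<in> carrier R" "a = m \<oplus> r \<otimes> y" by blast
    then have "c \<otimes> a = c \<otimes> m \<oplus> (c \<otimes> r) \<otimes> y" using Mc y c by (simp add: r_distr m_assoc)
    then show "c \<otimes> a \<in> ?K" using Ml[OF c] m c by blast
  qed
qed

lemma maximal_left_ideal_add_left_multiples:
  assumes M: "maximal_left_ideal M R" and y: "y \<in> carrier R" "y \<notin> M"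
  shows "{m \<oplus> r \<otimes> y | m r. m \<in> M \<and> r \<in> carrier R} = carrier R" (is "?K = _")
proof -
  have "M \<subseteq> ?K"
    using additive_subgroup.a_Hcarr[OF maximal_left_idealD(1)[OF M]] y(1)
    by (force intro: exI[of _ \<zero>])
  moreover have "y \<in> ?K"
    using additive_subgroup.zero_closed[OF maximal_left_idealD(1)[OF M]] y(1)
    by (force intro: exI[of _ \<one>])
  ultimately show ?thesis
    using M y left_ideal_add_left_multiples[of M y] unfolding maximal_left_ideal_def by blast
qed

lemma left_ideal_colon:
  assumes M: "left_ideal M R" and s: "s \<in> carrier R"
  shows "left_ideal {r \<in> carrier R. r \<otimes> s \<in> M} R"
proof -
  have Ms: "additive_subgroup M R" and Ml: "\<And>a x. a \<in> carrier R \<Longrightarrow> x \<in> M \<Longrightarrow> a \<otimes> x \<in> M"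
    using M unfolding left_ideal_def by auto
  show ?thesis
    unfolding left_ideal_def
  proof (intro conjI ballI additive_subgroupI add.subgroupI)
    show "{r \<in> carrier R. r \<otimes> s \<in> M} \<noteq> {}"
      using additive_subgroup.zero_closed[OF Ms] s by (auto intro!: exI[of _ \<zero>])
  qed (use s additive_subgroup.a_inv_closed[OF Ms] additive_subgroup.a_closed[OF Ms] Ml
       in \<open>auto simp: l_minus l_distr m_assoc\<close>)
qed

lemma maximal_left_ideal_colon:
  assumes M: "maximal_left_ideal M R" and s: "s \<in> carrier R" "s \<notin> M"
  shows "maximal_left_ideal {r \<in> carrier R. r \<otimes> s \<in> M} R" (is "maximal_left_ideal ?C R")
  unfolding maximal_left_ideal_def
proof (intro conjI allI impI)
  show "left_ideal ?C R"
    using M s unfolding maximal_left_ideal_def by (blast intro: left_ideal_colon)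
  show "?C \<noteq> carrier R" using s by (metis (no_types, lifting) l_one mem_Collect_eq one_closed)
  fix K assume K: "left_ideal K R \<and> ?C \<subseteq> K"
  have Ks: "additive_subgroup K R" and Kl: "\<And>a x. a \<in> carrier R \<Longrightarrow> x \<in> K \<Longrightarrow> a \<otimes> x \<in> K"
    using K unfolding left_ideal_def by auto
  have Kc: "K \<subseteq> carrier R" using additive_subgroup.a_subset[OF Ks] .
  have "K = carrier R" if "K \<noteq> ?C"
  proof -
    have "\<not> K \<subseteq> ?C" using that K by blast
    then obtain k where k: "k \<in> K" "k \<notin> ?C" by blast
    then have kc: "k \<in> carrier R" and ks: "k \<otimes> s \<notin> M" using Kc by auto
    have "t \<in> K" if t: "t \<in> carrier R" for t
    proof -
      \<comment> \<open>write \<open>t s = m + b k s\<close>; then \<open>t - b k\<close> lies in the colon ideal, hence in \<open>K\<close>\<close>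
      obtain m b where m: "m \<in> M" "b \<in> carrier R" "t \<otimes> s = m \<oplus> b \<otimes> (k \<otimes> s)"
        using maximal_left_ideal_add_left_multiples[OF M _ ks] t s kc by blast
      have mc: "m \<in> carrier R"
        using m(1) additive_subgroup.a_Hcarr[OF maximal_left_idealD(1)[OF M]] by blast
      have "(t \<ominus> b \<otimes> k) \<otimes> s = m"
      proof -
        have "(t \<ominus> b \<otimes> k) \<otimes> s = t \<otimes> s \<ominus> b \<otimes> (k \<otimes> s)"
          using t m(2) kc s by algebra
        then show ?thesis
          using m mc kc s by (simp add: a_minus_def a_assoc r_neg)
      qed
      then have "t \<ominus> b \<otimes> k \<in> K" using K m t kc by auto
      then have "(t \<ominus> b \<otimes> k) \<oplus> b \<otimes> k \<in> K"
        using additive_subgroup.a_closed[OF Ks] Kl[OF m(2) k(1)] by blast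
      moreover have "(t \<ominus> b \<otimes> k) \<oplus> b \<otimes> k = t"
        using t m(2) kc by algebra
      ultimately show ?thesis by simp
    qed
    then show "K = carrier R" using Kc by blast
  qed
  then show "K = ?C \<or> K = carrier R" by blast
qed

lemma jacobson_radical_ideal: "ideal (jacobson_radical R) R"
proof -
  let ?J = "jacobson_radical R"
  have mem: "x \<in> ?J \<longleftrightarrow> x \<in> carrier R \<and> (\<forall>M. maximal_left_ideal M R \<longrightarrow> x \<in> M)" for x
    unfolding jacobson_radical_def by auto
  note sub = maximal_left_idealD(1)
  show ?thesis
  proof (rule idealI[OF ring_axioms])
    show "subgroup ?J (add_monoid R)"
    proof (rule add.subgroupI)
      have "\<zero> \<in> ?J" by (auto simp: mem dest: sub intro: additive_subgroup.zero_closed)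
      then show "?J \<noteq> {}" by blast
    qed (auto simp: mem dest: sub intro: additive_subgroup.a_inv_closed additive_subgroup.a_closed)
  next
    fix a x assume a: "a \<in> ?J" and x: "x \<in> carrier R"
    show "x \<otimes> a \<in> ?J" using a x by (auto simp: mem dest: maximal_left_idealD(2))
    show "a \<otimes> x \<in> ?J"
      unfolding mem
    proof (intro conjI allI impI)
      show "a \<otimes> x \<in> carrier R" using a x by (simp add: mem)
      fix M assume M: "maximal_left_ideal M R"
      show "a \<otimes> x \<in> M"
      proof (cases "x \<in> M")
        case True
        then show ?thesis using a maximal_left_idealD(2)[OF M] by (simp add: mem)
      next
        case False
        with a mem maximal_left_ideal_colon[OF M x] show ?thesis by blast
      qed
    qed
  qed
qed

lemma jacobson_radicalI:
  assumes y: "y \<in> carrier R"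
    and inv: "\<And>r. r \<in> carrier R \<Longrightarrow> left_invertible R (\<one> \<ominus> r \<otimes> y)"
  shows "y \<in> jacobson_radical R"
  unfolding jacobson_radical_def
proof (intro IntI InterI CollectI y)
  fix M assume "M \<in> {I. maximal_left_ideal I R}"
  then have M: "maximal_left_ideal M R" by simp
  show "y \<in> M"
  proof (rule ccontr)
    assume "y \<notin> M"
    then obtain m r where m: "m \<in> M" "r \<in> carrier R" "\<one> = m \<oplus> r \<otimes> y"
      using maximal_left_ideal_add_left_multiples[OF M y] by blast
    have mc: "m \<in> carrier R"
      using m(1) additive_subgroup.a_Hcarr[OF maximal_left_idealD(1)[OF M]] by blast
    have "m = \<one> \<ominus> r \<otimes> y"
      using m mc y by (metis add.inv_solve_right m_closed one_closed a_minus_def)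
    moreover obtain L where "L \<in> carrier R" "L \<otimes> (\<one> \<ominus> r \<otimes> y) = \<one>"
      using inv[OF m(2)] unfolding left_invertible_def by blast
    ultimately have "\<one> \<in> M" using maximal_left_idealD(2)[OF M _ m(1)] by metis
    then show False using maximal_left_idealD(3)[OF M] by contradiction
  qed
qed

lemma rcos_nat_pow:
  assumes "ideal I R" "x \<in> carrier R"
  shows "(I +> x) [^]\<^bsub>R Quot I\<^esub> (n::nat) = I +> x [^] n"
  using ring_hom_ring.hom_nat_pow[OF ideal.rcos_ring_hom_ring[OF assms(1)] assms(2)] by simp

lemma FactRing_carrier_rcos: "carrier (R Quot I) = (+>) I ` carrier R"
  unfolding FactRing_def A_RCOSETS_def' by auto

lemma FactRing_nat_pow_eq_self:
  assumes I: "ideal I R" and pow: "\<And>x. x \<in> carrier R \<Longrightarrow> x [^] n \<ominus> x \<in> I"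
    and q: "q \<in> carrier (R Quot I)"
  shows "q [^]\<^bsub>R Quot I\<^esub> (n::nat) = q"
proof -
  obtain x where x: "x \<in> carrier R" "q = I +> x" using q FactRing_carrier_rcos by blast
  then show ?thesis
    using rcos_nat_pow[OF I x(1)] quotient_eq_iff_same_a_r_cos[OF I _ x(1)] pow[OF x(1)] by simp
qed

end


section \<open>Rings in which every element is tripotent\<close>

definition torsion :: "('a, 'b) ring_scheme \<Rightarrow> nat \<Rightarrow> 'a set" where
  "torsion R n = {x \<in> carrier R. add_pow R n x = \<zero>\<^bsub>R\<^esub>}"

context ring begin

lemma torsion_ideal: "ideal (torsion R n) R"
proof (rule idealI[OF ring_axioms])
  show "subgroup (torsion R n) (add_monoid R)"
    by (rule add.subgroupI) (auto simp: torsion_def add.nat_pow_distrib add.nat_pow_inv)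
next
  fix a x assume "a \<in> torsion R n" and x: "x \<in> carrier R"
  then have a: "a \<in> carrier R" "add_pow R n a = \<zero>" by (simp_all add: torsion_def)
  have "add_pow R n (x \<otimes> a) = x \<otimes> add_pow R n a" by (rule add_pow_rdistr[OF x a(1), symmetric])
  moreover have "add_pow R n (a \<otimes> x) = add_pow R n a \<otimes> x" by (rule add_pow_ldistr[OF a(1) x, symmetric])
  ultimately show "x \<otimes> a \<in> torsion R n" "a \<otimes> x \<in> torsion R n"
    using a x by (simp_all add: torsion_def)
qed

lemma add_pow_one_mult: "x \<in> carrier R \<Longrightarrow> add_pow R (k::nat) \<one> \<otimes> x = add_pow R k x"
  by (simp add: add_pow_ldistr)

lemma torsion_coprime_decomposition:
  assumes char: "add_pow R (m * n) \<one> = \<zero>" and "coprime m n" and "m \<noteq> 0"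
  shows "R \<simeq> RDirProd (R Quot torsion R m) (R Quot torsion R n)"
proof -
  obtain a b where bezout: "m * a = n * b + 1"
    using bezout_nat[OF \<open>m \<noteq> 0\<close>, of n] \<open>coprime m n\<close> by auto
  have mn_multiple_zero: "add_pow R (m * n * k) x = \<zero>" if "x \<in> carrier R" for k x
  proof -
    have "add_pow R (m * n) x = \<zero>"
      using that add_pow_one_mult[of x "m * n"] char by simp
    then show ?thesis
      using add.nat_pow_pow[of x k "m * n"] that by simp
  qed
  have "torsion R m \<inter> torsion R n = {\<zero>}"
  proof (intro equalityI subsetI)
    fix x assume "x \<in> torsion R m \<inter> torsion R n"
    then have x: "x \<in> carrier R" "add_pow R m x = \<zero>" "add_pow R n x = \<zero>" by (auto simp: torsion_def)
    have "add_pow R (m * a) x = add_pow R (n * b) x \<oplus> x"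
      using x(1) by (simp add: bezout add.nat_pow_mult[symmetric])
    moreover have "add_pow R (m * a) x = \<zero>" "add_pow R (n * b) x = \<zero>"
      using x by (metis add.nat_pow_pow add.nat_pow_one)+
    ultimately show "x \<in> {\<zero>}" using x(1) by simp
  qed (auto simp: torsion_def)
  moreover have "torsion R m <+>\<^bsub>R\<^esub> torsion R n = carrier R"
  proof (rule ideal.one_imp_carrier[OF add_ideals[OF torsion_ideal torsion_ideal]])
    have "\<one> = \<ominus> (add_pow R (n * b) \<one>) \<oplus> add_pow R (m * a) \<one>"
      by (simp add: bezout add.nat_pow_mult[symmetric] a_assoc[symmetric] l_neg)
    moreover have "\<ominus> (add_pow R (n * b) \<one>) \<in> torsion R m"
      using mn_multiple_zero[of \<one> b] add.nat_pow_pow[of \<one> m "n * b"]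
      by (simp add: torsion_def add.nat_pow_inv mult_ac)
    moreover have "add_pow R (m * a) \<one> \<in> torsion R n"
      using mn_multiple_zero[of \<one> a] add.nat_pow_pow[of \<one> n "m * a"]
      by (simp add: torsion_def mult_ac)
    ultimately show "\<one> \<in> torsion R m <+>\<^bsub>R\<^esub> torsion R n"
      unfolding set_add_def' by blast
  qed
  ultimately show ?thesis
    using ring_iso_trans[OF FactRing_zeroideal(2)] chinese_remainder_simple[OF torsion_ideal torsion_ideal, of m n]
    by simp
qed

lemma tripotent_ring_add_pow_six:
  assumes trip: "\<And>x. x \<in> carrier R \<Longrightarrow> x [^] (3::nat) = x"
  shows "add_pow R (6::nat) \<one> = \<zero>"
proof -
  have "add_pow R (6::nat) \<one> \<oplus> (\<one> \<oplus> \<one>) = (\<one> \<oplus> \<one>) [^] (3::nat)"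
    by (simp add: numeral_eq_Suc) algebra
  also have "\<dots> = \<one> \<oplus> \<one>" by (simp add: trip)
  finally show ?thesis by simp
qed

lemma tripotent_ring_add_pow_square_add:
  assumes trip: "\<And>x. x \<in> carrier R \<Longrightarrow> x [^] (3::nat) = x" and x: "x \<in> carrier R"
  shows "add_pow R (3::nat) (x \<otimes> x \<oplus> x) = \<zero>"
proof -
  have "(x \<oplus> \<one>) [^] (3::nat) = add_pow R (3::nat) (x \<otimes> x \<oplus> x) \<oplus> (x [^] (3::nat) \<oplus> \<one>)"
    using x by (simp add: numeral_3_eq_3) (algebra, (simp add: r_neg1 r_neg2)?)
  then have "x \<oplus> \<one> = add_pow R (3::nat) (x \<otimes> x \<oplus> x) \<oplus> (x \<oplus> \<one>)"
    using x by (simp add: trip)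
  then show ?thesis using x by simp
qed

lemma tripotent_ring_boolean_quotient:
  assumes trip: "\<And>x. x \<in> carrier R \<Longrightarrow> x [^] (3::nat) = x"
  shows "boolean_ring (R Quot torsion R 3)"
proof -
  interpret Q: ring "R Quot torsion R 3" by (rule ideal.quotient_is_ring[OF torsion_ideal])
  have "x [^] (2::nat) \<ominus> x \<in> torsion R 3" if x: "x \<in> carrier R" for x
  proof -
    \<comment> \<open>\<open>x\<^sup>2 - x = (x\<^sup>2 + x) - 2x\<close>, and both summands are killed by \<open>3\<close>\<close>
    have "x [^] (2::nat) \<ominus> x = (x \<otimes> x \<oplus> x) \<oplus> \<ominus> add_pow R (2::nat) x"
      using x by (simp add: numeral_2_eq_2) algebra
    moreover have "add_pow R (3::nat) (add_pow R (2::nat) x) = \<zero>"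
      using x add.nat_pow_pow[of x 2 3] add.nat_pow_pow[of x 3 2] tripotent_ring_add_pow_six[OF trip]
        add_pow_one_mult[of x 6]
      by simp
    ultimately show ?thesis
      using x tripotent_ring_add_pow_square_add[OF trip x]
      by (simp add: torsion_def add.nat_pow_distrib add.nat_pow_inv)
  qed
  then have "q \<otimes>\<^bsub>R Quot torsion R 3\<^esub> q = q" if "q \<in> carrier (R Quot torsion R 3)" for q
    using FactRing_nat_pow_eq_self[OF torsion_ideal _ that, of 2] that by (simp add: numeral_2_eq_2)
  then show ?thesis
    unfolding boolean_ring_def using Q.ring_axioms by blast
qed

lemma tripotent_ring_yaqub_quotient:
  assumes trip: "\<And>x. x \<in> carrier R \<Longrightarrow> x [^] (3::nat) = x"
  shows "yaqub_ring (R Quot torsion R 2)"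
proof -
  let ?Q = "R Quot torsion R 2"
  interpret Q: ring ?Q by (rule ideal.quotient_is_ring[OF torsion_ideal])
  have hom: "(+>) (torsion R 2) \<in> ring_hom R ?Q" by (rule ideal.rcos_ring_hom[OF torsion_ideal])
  have "add_pow R (2::nat) (\<one> \<oplus> \<one> \<oplus> \<one>) = add_pow R (6::nat) \<one>"
    by (simp add: numeral_eq_Suc) algebra
  then have "\<one> \<oplus> \<one> \<oplus> \<one> \<in> torsion R 2"
    by (simp add: torsion_def tripotent_ring_add_pow_six[OF trip])
  then have "torsion R 2 = torsion R 2 +> (\<one> \<oplus> \<one> \<oplus> \<one>)"
    by (rule a_rcos_zero[OF torsion_ideal, symmetric])
  then have "\<one>\<^bsub>?Q\<^esub> \<oplus>\<^bsub>?Q\<^esub> \<one>\<^bsub>?Q\<^esub> \<oplus>\<^bsub>?Q\<^esub> \<one>\<^bsub>?Q\<^esub> = torsion R 2"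
    using ring_hom_add[OF hom] ring_hom_one[OF hom] by simp
  also have "\<dots> = \<zero>\<^bsub>?Q\<^esub>" by (simp add: FactRing_def)
  finally have "\<one>\<^bsub>?Q\<^esub> \<oplus>\<^bsub>?Q\<^esub> \<one>\<^bsub>?Q\<^esub> \<oplus>\<^bsub>?Q\<^esub> \<one>\<^bsub>?Q\<^esub> = \<zero>\<^bsub>?Q\<^esub>" .
  then have "(\<one>\<^bsub>?Q\<^esub> \<oplus>\<^bsub>?Q\<^esub> \<one>\<^bsub>?Q\<^esub> \<oplus>\<^bsub>?Q\<^esub> \<one>\<^bsub>?Q\<^esub>) [^]\<^bsub>?Q\<^esub> (1::nat) = \<zero>\<^bsub>?Q\<^esub>"
    by simp
  moreover have "q [^]\<^bsub>?Q\<^esub> (3::nat) = q" if "q \<in> carrier ?Q" for q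
  proof (rule FactRing_nat_pow_eq_self[OF torsion_ideal _ that])
    show "x [^] (3::nat) \<ominus> x \<in> torsion R 2" if "x \<in> carrier R" for x
      using trip[OF that] that by (simp add: torsion_def a_minus_def r_neg)
  qed
  ultimately show ?thesis
    unfolding yaqub_ring_def using Q.ring_axioms by blast
qed

section \<open>DT rings\<close>

lemma tripotentsD:
  "e \<in> tripotents R \<Longrightarrow> e \<in> carrier R \<and> e \<otimes> e \<otimes> e = e"
  unfolding tripotents_def by (auto simp: numeral_3_eq_3)

lemma tripotent_complement:
  assumes e: "e \<in> carrier R" "e \<otimes> e \<otimes> e = e"
  shows "(\<one> \<ominus> e \<otimes> e) \<otimes> (\<one> \<ominus> e \<otimes> e) = \<one> \<ominus> e \<otimes> e"
    and "(e \<oplus> (\<one> \<ominus> e \<otimes> e)) \<otimes> (e \<oplus> (\<one> \<ominus> e \<otimes> e)) = \<one>"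
proof -
  have "(\<one> \<ominus> e \<otimes> e) \<otimes> (\<one> \<ominus> e \<otimes> e) = \<one> \<ominus> e \<otimes> e \<ominus> e \<otimes> e \<oplus> (e \<otimes> e \<otimes> e) \<otimes> e"
    using e(1) by (algebra, (simp add: r_neg1 r_neg2)?)
  also have "\<dots> = \<one> \<ominus> e \<otimes> e \<ominus> e \<otimes> e \<oplus> e \<otimes> e"
    using e by simp
  also have "\<dots> = \<one> \<ominus> e \<otimes> e"
    using e(1) by algebra
  finally show "(\<one> \<ominus> e \<otimes> e) \<otimes> (\<one> \<ominus> e \<otimes> e) = \<one> \<ominus> e \<otimes> e" .
  have "(e \<oplus> (\<one> \<ominus> e \<otimes> e)) \<otimes> (e \<oplus> (\<one> \<ominus> e \<otimes> e))
      = \<one> \<oplus> (e \<ominus> e \<otimes> e \<otimes> e) \<oplus> (e \<ominus> e \<otimes> e \<otimes> e) \<oplus> ((e \<otimes> e \<otimes> e) \<otimes> e \<ominus> e \<otimes> e)"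
    using e(1) by (algebra, (simp add: r_neg1 r_neg2)?)
  also have "\<dots> = \<one>" using e by (simp add: a_minus_def r_neg)
  finally show "(e \<oplus> (\<one> \<ominus> e \<otimes> e)) \<otimes> (e \<oplus> (\<one> \<ominus> e \<otimes> e)) = \<one>" .
qed

lemma DT_ringD: "DT_ring R \<Longrightarrow> r \<in> carrier R \<Longrightarrow> \<exists>e\<in>tripotents R. \<exists>d\<in>Delta R. r = e \<oplus> d"
  unfolding DT_ring_def by blast

lemma Delta_subset_jacobson_radical:
  assumes DT: "DT_ring R"
  shows "Delta R \<subseteq> jacobson_radical R"
proof
  fix d assume d: "d \<in> Delta R"
  have dc: "d \<in> carrier R" using Delta_closed[OF d] .
  show "d \<in> jacobson_radical R"
  proof (rule jacobson_radicalI[OF dc])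
    fix r assume "r \<in> carrier R"
    then obtain e d' where e: "e \<in> carrier R" "e \<otimes> e \<otimes> e = e" and d': "d' \<in> Delta R"
      and r: "r = e \<oplus> d'"
      using DT_ringD[OF DT] tripotentsD by blast
    define f where "f = \<one> \<ominus> e \<otimes> e"
    define w where "w = e \<oplus> f"
    have f: "f \<in> carrier R" "f \<otimes> f = f"
      using e tripotent_complement(1)[OF e] unfolding f_def by simp_all
    have w: "w \<in> Units R"
      using e(1) f(1) tripotent_complement(2)[OF e] unfolding w_def f_def Units_def by auto
    \<comment> \<open>\<open>r = w - f + d'\<close> with \<open>w\<close> a unit, so \<open>1 - r d\<close> is \<open>f d\<close> plus a unit of the form \<open>1 + \<Delta>\<close>\<close>
    define u where "u = \<one> \<oplus> (\<ominus> (w \<otimes> d) \<oplus> \<ominus> (d' \<otimes> d))"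
    have u: "u \<in> Units R"
      unfolding u_def
      by (intro one_add_Delta_Units Delta_add Delta_uminus Delta_mult_Units_left Delta_mult w d d')
    have uc: "u \<in> carrier R" "inv u \<in> carrier R" "inv u \<otimes> u = \<one>"
      using u by auto
    have d'c: "d' \<in> carrier R" using Delta_closed[OF d'] .
    have "\<one> \<ominus> r \<otimes> d = u \<oplus> f \<otimes> d"
      unfolding r u_def w_def using e(1) f(1) d'c dc by algebra
    also have "\<dots> = (\<one> \<oplus> f \<otimes> (d \<otimes> inv u)) \<otimes> u"
    proof -
      have "(\<one> \<oplus> f \<otimes> (d \<otimes> inv u)) \<otimes> u = u \<oplus> f \<otimes> d \<otimes> (inv u \<otimes> u)"
        using f(1) dc uc by algebra
      then show ?thesis using uc f(1) dc by simp
    qed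
    finally show "left_invertible R (\<one> \<ominus> r \<otimes> d)"
      using left_invertible_mult[OF Delta_idempotent_left_invertible[OF f Delta_mult_Units_right[OF Units_inv_Units[OF u] d]]
          Units_left_invertible[OF u]] f(1) dc uc
      by simp
  qed
qed

lemma DT_quotient_jacobson_radical_tripotent:
  assumes DT: "DT_ring R"
    and q: "q \<in> carrier (R Quot jacobson_radical R)"
  shows "q [^]\<^bsub>R Quot jacobson_radical R\<^esub> (3::nat) = q"
proof -
  let ?J = "jacobson_radical R"
  obtain x where x: "x \<in> carrier R" "q = ?J +> x" using q FactRing_carrier_rcos by blast
  obtain e d where e: "e \<in> tripotents R" and d: "d \<in> Delta R" and xe: "x = e \<oplus> d"
    using DT_ringD[OF DT x(1)] by blast
  have ec: "e \<in> carrier R" using tripotentsD[OF e] by simp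
  have "x \<ominus> e = d" unfolding xe using ec Delta_closed[OF d] by algebra
  then have "q = ?J +> e"
    using x quotient_eq_iff_same_a_r_cos[OF jacobson_radical_ideal x(1) ec]
      Delta_subset_jacobson_radical[OF DT] d by auto
  then show ?thesis
    using rcos_nat_pow[OF jacobson_radical_ideal ec] e unfolding tripotents_def by simp
qed

end

theorem theorem4p8:
  fixes R :: "('a, 'b) ring_scheme"
  assumes "DT_ring R"
  shows "\<exists>(R1 :: 'a set set ring) (R2 :: 'a set set ring).
           (zero_ring R1 \<or> (boolean_ring R1 \<and> \<not> zero_ring R1)) \<and>
           (zero_ring R2 \<or> (yaqub_ring R2 \<and> \<not> zero_ring R2)) \<and>
           R Quot (jacobson_radical R) \<simeq> RDirProd R1 R2"
proof -
  interpret ring R using assms unfolding DT_ring_def by blast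
  let ?S = "R Quot jacobson_radical R"
  interpret S: ring ?S by (rule ideal.quotient_is_ring[OF jacobson_radical_ideal])
  have trip: "\<And>q. q \<in> carrier ?S \<Longrightarrow> q [^]\<^bsub>?S\<^esub> (3::nat) = q"
    by (rule DT_quotient_jacobson_radical_tripotent[OF assms])
  have "?S \<simeq> RDirProd (?S Quot torsion ?S 3) (?S Quot torsion ?S 2)"
    by (rule S.torsion_coprime_decomposition) (simp_all add: S.tripotent_ring_add_pow_six[OF trip])
  moreover have "boolean_ring (?S Quot torsion ?S 3)"
    by (rule S.tripotent_ring_boolean_quotient) (rule trip)
  moreover have "yaqub_ring (?S Quot torsion ?S 2)"
    by (rule S.tripotent_ring_yaqub_quotient) (rule trip)
  ultimately show ?thesis by blast
qed

end
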